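(* Let $(K,\delta)$ be a differential field and let $L_1,\ldots,L_k$ be nonzero elements of $K[\partial;\delta]$ of orders $r_1,\ldots,r_k$. Let $n\ge \operatorname{ord}(\mathrm{LCLM}(L_1,\ldots,L_k))$, and let $M_n$ be the block matrix with $k+1$ block rows and $k$ block columns whose $i$-th block row ($1\le i\le k$) has $S_n(L_i)$ in block column $i$ and zeros elsewhere, and whose last block row is $(S_n(-1),S_n(-1),\ldots,S_n(-1))$. Then: (i) If $L$ is a common left multiple of $L_1,\ldots,L_k$ with $\operatorname{ord}(L)\le n$ and $L=Q_1L_1=\cdots=Q_kL_k$, then the vector $(\phi_{n-r_1}(Q_1),\ldots,\phi_{n-r_k}(Q_k),\phi_n(L))$ belongs to the left kernel of $M_n$. (ii) If $(u_1,\ldots,u_k,u)$ is a nonzero vector in the left kernel of $M_n$, with $u_i\in K^{n+1-r_i}$ for $i=1,\ldots,k$ and $u\in K^{n+1}$, then $u$ is nonzero and $\phi_n^{-1}(u)$ is a common left multiple of $L_1,\ldots,L_k$ with respective left cofactors $\phi_{n-r_1}^{-1}(u_1),\ldots,\phi_{n-r_k}^{-1}(u_k)$, i.e. $\phi_n^{-1}(u)=\phi_{n-r_i}^{-1}(u_i)L_i$ for all $i$. (iii) If $\rho$ is the rank of $M_n$, then $\operatorname{ord}(\mathrm{LCLM}(L_1,\ldots,L_k))=\rho+\sum_{i=1}^k r_i-k(n+1)$.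
   Context: $(K,\delta)$ is a field with an additive map $\delta$ satisfying $\delta(ab)=a\delta(b)+\delta(a)b$. $K[\partial;\delta]$ is the ring of linear differential operators $\sum a_i\partial^i$, $a_i\in K$, with $\partial a=a\partial+\delta(a)$; the order of a nonzero operator is its degree in $\partial$. A common left multiple of nonzero $L_1,\ldots,L_k$ is an $L$ with $L=Q_1L_1=\cdots=Q_kL_k$ for some $Q_i\in K[\partial;\delta]$; an LCLM is a nonzero common left multiple of least order. $K[\partial;\delta]_{\le n}$ denotes operators of order at most $n$, and $\phi_n:K[\partial;\delta]_{\le n}\to K^{n+1}$ is the $K$-linear bijection $\sum_{i=0}^n a_i\partial^i\mapsto(a_n,a_{n-1},\ldots,a_0)$. For a nonzero $P$ of order $m$ and $n\ge m$, $S_n(P)$ is the $(n-m+1)\times(n+1)$ matrix whose rows are $\phi_n(\partial^{n-m}P),\phi_n(\partial^{n-m-1}P),\ldots,\phi_n(P)$ in this order (so $S_n(-1)$ is minus the identity of size $n+1$). Vectors are row vectors; the left kernel of a matrix $M$ is $\{v: vM=0\}$. *)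

theory Defs
  imports "HOL-Computational_Algebra.Polynomial" "Jordan_Normal_Form.DL_Rank"
begin

definition is_derivation :: "('a::field \<Rightarrow> 'a) \<Rightarrow> bool" where
  "is_derivation \<delta> \<longleftrightarrow> (\<forall>a b. \<delta> (a + b) = \<delta> a + \<delta> b) \<and>
                           (\<forall>a b. \<delta> (a * b) = a * \<delta> b + \<delta> a * b)"

text \<open>An operator \<open>\<Sum> a_i \<partial>^i\<close> of \<open>K[\<partial>;\<delta>]\<close> is represented by the polynomial
  with coefficients \<open>a_i\<close>; its order is the degree.  Only the multiplication
  differs from the commutative one.  Left multiplication by \<open>\<partial>\<close>:
  \<open>\<partial> (\<Sum> b_j \<partial>^j) = \<Sum> (b_j \<partial>^(j+1) + \<delta>(b_j) \<partial>^j)\<close>.\<close>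
definition dleft :: "('a::field \<Rightarrow> 'a) \<Rightarrow> 'a poly \<Rightarrow> 'a poly" where
  "dleft \<delta> Q = pCons 0 Q + Poly (map \<delta> (coeffs Q))"

definition dmult :: "('a::field \<Rightarrow> 'a) \<Rightarrow> 'a poly \<Rightarrow> 'a poly \<Rightarrow> 'a poly" where
  "dmult \<delta> P Q = (\<Sum>i\<le>degree P. Polynomial.smult (coeff P i) ((dleft \<delta> ^^ i) Q))"

definition common_left_multiple :: "('a::field \<Rightarrow> 'a) \<Rightarrow> 'a poly list \<Rightarrow> 'a poly \<Rightarrow> bool" where
  "common_left_multiple \<delta> Ls L \<longleftrightarrow> (\<forall>i<length Ls. \<exists>Q. L = dmult \<delta> Q (Ls ! i))"

definition ord_lclm :: "('a::field \<Rightarrow> 'a) \<Rightarrow> 'a poly list \<Rightarrow> nat" where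
  "ord_lclm \<delta> Ls = (LEAST m. \<exists>L. L \<noteq> 0 \<and> degree L = m \<and> common_left_multiple \<delta> Ls L)"

definition phi :: "nat \<Rightarrow> 'a::field poly \<Rightarrow> 'a vec" where
  "phi n P = vec (n + 1) (\<lambda>j. coeff P (n - j))"

text \<open>Inverse of \<open>\<phi>_n\<close> on \<open>K^(n+1)\<close> (with \<open>n + 1\<close> the dimension of the vector).\<close>
definition phi_inv :: "'a::field vec \<Rightarrow> 'a poly" where
  "phi_inv u = (\<Sum>j<dim_vec u. Polynomial.monom (u $ j) (dim_vec u - 1 - j))"

text \<open>\<open>S_n(P)\<close>: rows \<open>\<phi>_n(\<partial>^(n-m) P), \<dots>, \<phi>_n(P)\<close>, \<open>m = ord P\<close>.\<close>
definition S_mat :: "('a::field \<Rightarrow> 'a) \<Rightarrow> nat \<Rightarrow> 'a poly \<Rightarrow> 'a mat" where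
  "S_mat \<delta> n P = (let m = degree P in
     mat (n - m + 1) (n + 1)
       (\<lambda>(i, j). coeff (dmult \<delta> (Polynomial.monom 1 (n - m - i)) P) (n - j)))"

text \<open>The block matrix \<open>M_n\<close>: block row \<open>i\<close> (\<open>i < k\<close>) has \<open>S_n(L_i)\<close> in block
  column \<open>i\<close> and zeros elsewhere; the last block row is \<open>(S_n(-1), \<dots>, S_n(-1))\<close>.\<close>
definition M_mat :: "('a::field \<Rightarrow> 'a) \<Rightarrow> nat \<Rightarrow> 'a poly list \<Rightarrow> 'a mat" where
  "M_mat \<delta> n Ls = (let k = length Ls in
     mat_of_rows (k * (n + 1))
       (concat (map (\<lambda>i. map (\<lambda>t. vec (k * (n + 1))
                    (\<lambda>b. if b div (n + 1) = i
                         then S_mat \<delta> n (Ls ! i) $$ (t, b mod (n + 1)) else 0))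
                   [0..<dim_row (S_mat \<delta> n (Ls ! i))]) [0..<k])
        @ map (\<lambda>t. vec (k * (n + 1)) (\<lambda>b. S_mat \<delta> n (-1) $$ (t, b mod (n + 1))))
              [0..<n + 1]))"

definition left_kernel :: "'a::field mat \<Rightarrow> 'a vec set" where
  "left_kernel M = {v. dim_vec v = dim_row M \<and>
     (\<forall>j<dim_col M. (\<Sum>i<dim_row M. v $ i * M $$ (i, j)) = 0)}"

definition concat_vecs :: "'a vec list \<Rightarrow> 'a vec \<Rightarrow> 'a vec" where
  "concat_vecs us u = foldr (\<lambda>v w. v @\<^sub>v w) us u"

definition mat_rank :: "'a::field mat \<Rightarrow> nat" where
  "mat_rank M = vec_space.rank (dim_row M) M"

end

theory Submission
  imports Defs "Jordan_Normal_Form.Matrix_Kernel"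
begin

text \<open>
  Multiplying the block row \<open>S\<^sub>n(L\<^sub>i)\<close> by \<open>u\<^sub>i\<close> yields the coefficient vector of
  \<open>\<phi>\<^sup>-\<^sup>1(u\<^sub>i) L\<^sub>i\<close>, and the last block row subtracts \<open>u\<close>; so \<open>(u\<^sub>1, \<dots>, u\<^sub>k, u)\<close> lies in
  the left kernel of \<open>M\<^sub>n\<close> exactly when \<open>\<phi>\<^sup>-\<^sup>1(u) = \<phi>\<^sup>-\<^sup>1(u\<^sub>i) L\<^sub>i\<close> for all \<open>i\<close>,
  which gives (i) and (ii).  For \<open>n = r\<^sub>1 + \<dots> + r\<^sub>k\<close> the matrix \<open>M\<^sub>n\<close> has more rows than
  columns, so (ii) yields a nonzero common left multiple.

  Operators admit right division with remainder, and the remainder of a common left multiple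
  divided by an LCLM \<open>L = P\<^sub>i L\<^sub>i\<close> of order \<open>d\<close> is a common left multiple of smaller order,
  hence zero.  So the left kernel of \<open>M\<^sub>n\<close> is the image of the injective linear map
  \<open>R \<mapsto> (\<phi>(R P\<^sub>1), \<dots>, \<phi>(R P\<^sub>k), \<phi>(R L))\<close> on operators of order at most \<open>n - d\<close>;
  it has dimension \<open>n - d + 1\<close>, and column rank plus left nullity equals the number of rows,
  \<open>\<Sum>\<^sub>i (n - r\<^sub>i + 1) + n + 1\<close>, which is (iii).
\<close>

section \<open>Multiplication of linear differential operators\<close>

lemma derivation_add: "is_derivation \<delta> \<Longrightarrow> \<delta> (a + b) = \<delta> a + \<delta> b"
  unfolding is_derivation_def by blast

lemma derivation_mult: "is_derivation \<delta> \<Longrightarrow> \<delta> (a * b) = a * \<delta> b + \<delta> a * b"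
  unfolding is_derivation_def by blast

lemma derivation_0: "is_derivation \<delta> \<Longrightarrow> \<delta> 0 = 0"
  using derivation_add[of \<delta> 0 0] by (metis add_cancel_right_right)

lemma derivation_1: "is_derivation \<delta> \<Longrightarrow> \<delta> 1 = 0"
  using derivation_mult[of \<delta> 1 1] by (metis add_cancel_right_right mult_1 mult_1_right)

lemma derivation_minus_1: "is_derivation \<delta> \<Longrightarrow> \<delta> (-1) = 0"
  using derivation_add[of \<delta> 1 "-1"] derivation_0[of \<delta>] derivation_1[of \<delta>] by simp

lemma coeff_dleft:
  "\<delta> 0 = 0 \<Longrightarrow> coeff (dleft \<delta> p) i = (if i = 0 then 0 else coeff p (i - 1)) + \<delta> (coeff p i)"
  by (cases i) (simp_all add: dleft_def nth_default_map_eq[of \<delta> 0 0] nth_default_coeffs_eq)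

lemma dleft_0 [simp]: "dleft \<delta> 0 = 0"
  by (simp add: dleft_def)

lemma dleft_pow_0 [simp]: "(dleft \<delta> ^^ j) 0 = 0"
  by (induction j) simp_all

lemma dleft_add: "is_derivation \<delta> \<Longrightarrow> dleft \<delta> (p + q) = dleft \<delta> p + dleft \<delta> q"
  by (rule poly_eqI) (simp add: coeff_dleft derivation_0 derivation_add)

lemma dleft_sum: "is_derivation \<delta> \<Longrightarrow> dleft \<delta> (\<Sum>i\<in>A. f i) = (\<Sum>i\<in>A. dleft \<delta> (f i))"
  by (induction A rule: infinite_finite_induct) (auto simp: dleft_add)

lemma dleft_smult: "is_derivation \<delta> \<Longrightarrow>
    dleft \<delta> (Polynomial.smult a p) = Polynomial.smult a (dleft \<delta> p) + Polynomial.smult (\<delta> a) p"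
  by (rule poly_eqI) (simp add: coeff_dleft derivation_0 derivation_mult algebra_simps)

lemma dleft_monom: "is_derivation \<delta> \<Longrightarrow>
    dleft \<delta> (monom a k) = monom a (Suc k) + monom (\<delta> a) k"
  by (rule poly_eqI) (auto simp: coeff_dleft derivation_0 coeff_monom)

lemma dleft_pow_monom_const:
  assumes "is_derivation \<delta>" and "\<delta> c = 0"
  shows "(dleft \<delta> ^^ j) (monom c k) = monom c (k + j)"
  by (induction j) (simp_all add: dleft_monom assms derivation_0)

lemma degree_dleft_le: "\<delta> 0 = 0 \<Longrightarrow> degree (dleft \<delta> p) \<le> Suc (degree p)"
  by (rule degree_le) (auto simp: coeff_dleft coeff_eq_0)

lemma degree_dleft_pow_le: "\<delta> 0 = 0 \<Longrightarrow> degree ((dleft \<delta> ^^ j) p) \<le> degree p + j"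
proof (induction j)
  case (Suc j)
  then show ?case using degree_dleft_le[of \<delta> "(dleft \<delta> ^^ j) p"] by simp
qed simp

lemma coeff_dleft_pow_degree:
  assumes "\<delta> 0 = 0"
  shows "coeff ((dleft \<delta> ^^ j) p) (degree p + j) = lead_coeff p"
proof (induction j)
  case (Suc j)
  have "coeff ((dleft \<delta> ^^ j) p) (Suc (degree p + j)) = 0"
    using degree_dleft_pow_le[of \<delta> j p, OF assms] by (intro coeff_eq_0) simp
  then show ?case using Suc by (simp add: coeff_dleft assms)
qed simp

lemma dmult_eq_sum:
  "degree P \<le> m \<Longrightarrow> dmult \<delta> P Q = (\<Sum>i\<le>m. Polynomial.smult (coeff P i) ((dleft \<delta> ^^ i) Q))"
  unfolding dmult_def by (rule sum.mono_neutral_left) (auto simp: coeff_eq_0)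

lemma dmult_0_left [simp]: "dmult \<delta> 0 Q = 0"
  by (simp add: dmult_def)

lemma dmult_0_right [simp]: "dmult \<delta> P 0 = 0"
  by (simp add: dmult_def)

lemma dmult_add_left: "dmult \<delta> (P + R) Q = dmult \<delta> P Q + dmult \<delta> R Q"
proof -
  let ?m = "max (degree P) (degree R)"
  have "degree (P + R) \<le> ?m"
    by (rule degree_add_le) auto
  then show ?thesis
    by (simp add: dmult_eq_sum[of _ ?m] smult_add_left sum.distrib)
qed

lemma smult_sum_right: "Polynomial.smult c (\<Sum>i\<in>A. f i) = (\<Sum>i\<in>A. Polynomial.smult c (f i))"
  by (induction A rule: infinite_finite_induct) (simp_all add: smult_add_right)

lemma dmult_smult_left: "dmult \<delta> (Polynomial.smult c P) Q = Polynomial.smult c (dmult \<delta> P Q)"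
  by (simp add: dmult_eq_sum[of _ "degree P"] smult_sum_right)

lemma dmult_diff_left: "dmult \<delta> (P - R) Q = dmult \<delta> P Q - dmult \<delta> R Q"
  by (metis add_diff_cancel_right' diff_add_cancel dmult_add_left)

lemma dmult_sum_left: "dmult \<delta> (\<Sum>i\<in>A. f i) Q = (\<Sum>i\<in>A. dmult \<delta> (f i) Q)"
  by (induction A rule: infinite_finite_induct) (auto simp: dmult_add_left)

lemma dmult_monom: "dmult \<delta> (monom c k) Q = Polynomial.smult c ((dleft \<delta> ^^ k) Q)"
proof -
  have "dmult \<delta> (monom c k) Q =
      (\<Sum>i\<le>k. Polynomial.smult (coeff (monom c k) i) ((dleft \<delta> ^^ i) Q))"
    by (rule dmult_eq_sum) (rule degree_monom_le)
  also have "\<dots> = (\<Sum>i\<le>k. if i = k then Polynomial.smult c ((dleft \<delta> ^^ i) Q) else 0)"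
    by (rule sum.cong) (auto simp: coeff_monom)
  finally show ?thesis by simp
qed

lemma degree_dmult_le:
  assumes "\<delta> 0 = 0"
  shows "degree (dmult \<delta> P Q) \<le> degree P + degree Q"
proof -
  have "degree (Polynomial.smult (coeff P i) ((dleft \<delta> ^^ i) Q)) \<le> degree P + degree Q"
    if "i \<le> degree P" for i
    using degree_dleft_pow_le[of \<delta> i Q, OF assms] that degree_smult_le le_trans by fastforce
  then show ?thesis
    unfolding dmult_def by (intro degree_sum_le) auto
qed

lemma coeff_dmult_degree:
  assumes "\<delta> 0 = 0"
  shows "coeff (dmult \<delta> P Q) (degree P + degree Q) = lead_coeff P * lead_coeff Q"
proof -
  let ?t = "\<lambda>i. coeff P i * coeff ((dleft \<delta> ^^ i) Q) (degree P + degree Q)"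
  have "coeff (dmult \<delta> P Q) (degree P + degree Q) = (\<Sum>i\<le>degree P. ?t i)"
    by (simp add: dmult_def coeff_sum)
  also have "\<dots> = (\<Sum>i\<in>{degree P}. ?t i)"
  proof (rule sum.mono_neutral_right)
    show "\<forall>i\<in>{..degree P} - {degree P}. ?t i = 0"
    proof
      fix i assume "i \<in> {..degree P} - {degree P}"
      then have "degree ((dleft \<delta> ^^ i) Q) < degree P + degree Q"
        using degree_dleft_pow_le[of \<delta> i Q, OF assms] by auto
      then show "?t i = 0" by (simp add: coeff_eq_0)
    qed
  qed auto
  also have "\<dots> = lead_coeff P * lead_coeff Q"
    using coeff_dleft_pow_degree[of \<delta> "degree P" Q, OF assms] by (simp add: add.commute)
  finally show ?thesis .
qed

lemma degree_dmult:
  assumes "\<delta> 0 = 0" and "P \<noteq> 0" and "Q \<noteq> 0"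
  shows "degree (dmult \<delta> P Q) = degree P + degree Q"
  using coeff_dmult_degree[of \<delta> P Q, OF assms(1)] degree_dmult_le[of \<delta> P Q, OF assms(1)] assms(2,3)
  by (metis le_antisym le_degree leading_coeff_0_iff mult_eq_0_iff)

lemma dmult_eq_0_iff: "\<delta> 0 = 0 \<Longrightarrow> dmult \<delta> P Q = 0 \<longleftrightarrow> P = 0 \<or> Q = 0"
  using coeff_dmult_degree[of \<delta> P Q] by (metis coeff_0 dmult_0_left dmult_0_right leading_coeff_0_iff mult_eq_0_iff)

lemma dmult_right_cancel: "\<delta> 0 = 0 \<Longrightarrow> Q \<noteq> 0 \<Longrightarrow> dmult \<delta> A Q = dmult \<delta> B Q \<Longrightarrow> A = B"
  using dmult_diff_left[of \<delta> A B Q] dmult_eq_0_iff[of \<delta> "A - B" Q] by simp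

lemma dleft_dmult:
  assumes d: "is_derivation \<delta>"
  shows "dleft \<delta> (dmult \<delta> P Q) = dmult \<delta> (dleft \<delta> P) Q"
proof -
  have monom: "dleft \<delta> (dmult \<delta> (monom c i) Q) = dmult \<delta> (dleft \<delta> (monom c i)) Q" for c i
    by (simp add: dmult_monom dleft_monom[OF d] dleft_smult[OF d] dmult_add_left)
  have "dleft \<delta> (dmult \<delta> P Q) = (\<Sum>i\<le>degree P. dleft \<delta> (dmult \<delta> (monom (coeff P i) i) Q))"
    by (subst (1) poly_as_sum_of_monoms[symmetric]) (simp add: dmult_sum_left dleft_sum[OF d])
  also have "\<dots> = dmult \<delta> (dleft \<delta> (\<Sum>i\<le>degree P. monom (coeff P i) i)) Q"
    by (simp add: monom dmult_sum_left dleft_sum[OF d])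
  finally show ?thesis by (simp add: poly_as_sum_of_monoms)
qed

lemma dleft_pow_dmult:
  "is_derivation \<delta> \<Longrightarrow> (dleft \<delta> ^^ j) (dmult \<delta> P Q) = dmult \<delta> ((dleft \<delta> ^^ j) P) Q"
  by (induction j) (simp_all add: dleft_dmult)

lemma dmult_assoc:
  assumes "is_derivation \<delta>"
  shows "dmult \<delta> R (dmult \<delta> P Q) = dmult \<delta> (dmult \<delta> R P) Q"
  by (simp add: dmult_def[of \<delta> R] dleft_pow_dmult[OF assms] dmult_sum_left dmult_smult_left)

section \<open>Right division and common left multiples\<close>

lemma dmult_right_division:
  assumes "\<delta> 0 = 0" and "B \<noteq> 0"
  shows "\<exists>Q R. A = dmult \<delta> Q B + R \<and> (R = 0 \<or> degree R < degree B)"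
proof (induction "degree A" arbitrary: A rule: less_induct)
  case less
  show ?case
  proof (cases "A = 0 \<or> degree A < degree B")
    case True
    then show ?thesis by (metis add_0 dmult_0_left)
  next
    case False
    define c where "c = lead_coeff A / lead_coeff B"
    define T where "T = dmult \<delta> (monom c (degree A - degree B)) B"
    have c: "c \<noteq> 0" using False assms(2) by (simp add: c_def)
    have deg_T: "degree T \<le> degree A"
      using degree_dmult_le[of \<delta> "monom c (degree A - degree B)" B, OF assms(1)] False
      by (simp add: T_def degree_monom_eq c)
    have "coeff T (degree A) = lead_coeff A"
      using coeff_dmult_degree[of \<delta> "monom c (degree A - degree B)" B, OF assms(1)] False assms(2)
      by (simp add: T_def degree_monom_eq c c_def)
    then have "coeff (A - T) (degree A) = 0" by simp
    moreover have "degree (A - T) \<le> degree A"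
      using deg_T by (simp add: degree_diff_le)
    ultimately consider "A - T = 0" | "degree (A - T) < degree A"
      by (metis le_neq_implies_less leading_coeff_0_iff)
    then show ?thesis
    proof cases
      case 1
      then show ?thesis unfolding T_def by (metis add.right_neutral eq_iff_diff_eq_0)
    next
      case 2
      then obtain Q R where "A - T = dmult \<delta> Q B + R" "R = 0 \<or> degree R < degree B"
        using less.hyps by blast
      then have "A = dmult \<delta> (Q + monom c (degree A - degree B)) B + R"
        by (simp add: T_def dmult_add_left algebra_simps)
      then show ?thesis using \<open>R = 0 \<or> degree R < degree B\<close> by blast
    qed
  qed
qed

lemma common_left_multiple_dmult:
  assumes "is_derivation \<delta>" and "common_left_multiple \<delta> Ls L"
  shows "common_left_multiple \<delta> Ls (dmult \<delta> R L)"
  unfolding common_left_multiple_def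
proof (intro allI impI)
  fix i assume "i < length Ls"
  then obtain Q where "L = dmult \<delta> Q (Ls ! i)"
    using assms(2) unfolding common_left_multiple_def by blast
  then show "\<exists>Q. dmult \<delta> R L = dmult \<delta> Q (Ls ! i)"
    using dmult_assoc[OF assms(1)] by blast
qed

lemma common_left_multiple_diff:
  assumes "common_left_multiple \<delta> Ls L" and "common_left_multiple \<delta> Ls L'"
  shows "common_left_multiple \<delta> Ls (L - L')"
  unfolding common_left_multiple_def
proof (intro allI impI)
  fix i assume "i < length Ls"
  then obtain Q Q' where "L = dmult \<delta> Q (Ls ! i)" "L' = dmult \<delta> Q' (Ls ! i)"
    using assms unfolding common_left_multiple_def by blast
  then have "L - L' = dmult \<delta> (Q - Q') (Ls ! i)"
    by (simp add: dmult_diff_left)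
  then show "\<exists>Q. L - L' = dmult \<delta> Q (Ls ! i)" ..
qed

lemma ord_lclm_le:
  "L \<noteq> 0 \<Longrightarrow> common_left_multiple \<delta> Ls L \<Longrightarrow> ord_lclm \<delta> Ls \<le> degree L"
  unfolding ord_lclm_def by (blast intro: Least_le)

lemma ord_lclm_attained:
  assumes "L \<noteq> 0" and "common_left_multiple \<delta> Ls L"
  obtains Lm where "Lm \<noteq> 0" "common_left_multiple \<delta> Ls Lm" "degree Lm = ord_lclm \<delta> Ls"
  using LeastI[of "\<lambda>m. \<exists>L. L \<noteq> 0 \<and> degree L = m \<and> common_left_multiple \<delta> Ls L" "degree L"] assms
  unfolding ord_lclm_def by blast

lemma common_left_multiple_right_dvd:
  assumes d: "is_derivation \<delta>"
    and Lm: "Lm \<noteq> 0" "common_left_multiple \<delta> Ls Lm" "degree Lm = ord_lclm \<delta> Ls"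
    and L: "common_left_multiple \<delta> Ls L"
  obtains R where "L = dmult \<delta> R Lm"
proof -
  obtain R Rm where div: "L = dmult \<delta> R Lm + Rm" and Rm: "Rm = 0 \<or> degree Rm < degree Lm"
    using dmult_right_division[of \<delta> Lm, OF derivation_0[OF d] Lm(1)] by blast
  have "common_left_multiple \<delta> Ls Rm"
    using common_left_multiple_diff[OF L common_left_multiple_dmult[OF d Lm(2), of R]] div by simp
  then have "Rm = 0"
    using Rm ord_lclm_le[of Rm \<delta> Ls] Lm(3) by linarith
  then show ?thesis using div that by simp
qed

section \<open>Coefficient vectors\<close>

lemma dim_phi [simp]: "dim_vec (phi m Q) = Suc m"
  by (simp add: phi_def)

lemma index_phi [simp]: "j < Suc m \<Longrightarrow> phi m Q $ j = coeff Q (m - j)"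
  by (simp add: phi_def)

lemma phi_add: "phi m (P + Q) = phi m P + phi m Q"
  by (intro eq_vecI) simp_all

lemma phi_smult: "phi m (Polynomial.smult c P) = c \<cdot>\<^sub>v phi m P"
  by (intro eq_vecI) simp_all

lemma coeff_phi_inv: "coeff (phi_inv u) i = (if i < dim_vec u then u $ (dim_vec u - 1 - i) else 0)"
proof -
  have "coeff (phi_inv u) i = (\<Sum>j<dim_vec u. if j = dim_vec u - 1 - i \<and> i < dim_vec u then u $ j else 0)"
    unfolding phi_inv_def coeff_sum coeff_monom by (rule sum.cong) auto
  then show ?thesis by (simp add: sum.delta)
qed

lemma degree_phi_inv: "degree (phi_inv u) \<le> dim_vec u - 1"
  by (rule degree_le) (auto simp: coeff_phi_inv)

lemma phi_inv_phi: "degree Q \<le> m \<Longrightarrow> phi_inv (phi m Q) = Q"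
  by (rule poly_eqI) (auto simp: coeff_phi_inv coeff_eq_0)

lemma phi_phi_inv: "dim_vec u = Suc m \<Longrightarrow> phi m (phi_inv u) = u"
  by (intro eq_vecI) (auto simp: coeff_phi_inv)

lemma phi_inv_zero_vec [simp]: "phi_inv (0\<^sub>v n) = 0"
  by (simp add: phi_inv_def)

lemma phi_inv_eq_0_iff: "phi_inv u = 0 \<longleftrightarrow> u = 0\<^sub>v (dim_vec u)"
proof
  assume u: "phi_inv u = 0"
  show "u = 0\<^sub>v (dim_vec u)"
  proof (rule eq_vecI)
    fix i assume "i < dim_vec (0\<^sub>v (dim_vec u))"
    then have "coeff (phi_inv u) (dim_vec u - 1 - i) = u $ i" by (simp add: coeff_phi_inv)
    then show "u $ i = 0\<^sub>v (dim_vec u) $ i" using u \<open>i < _\<close> by simp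
  qed simp
qed (metis phi_inv_zero_vec)

lemma phi_inv_eq_iff_coeffs:
  assumes "dim_vec u = Suc n" and "degree D \<le> n"
  shows "phi_inv u = D \<longleftrightarrow> (\<forall>p<Suc n. coeff D (n - p) = u $ p)"
  using phi_inv_phi[OF assms(2)] phi_phi_inv[OF assms(1)] assms(1)
  by (metis dim_phi eq_vecI index_phi)

lemma phi_inv_image_carrier_vec: "phi_inv ` carrier_vec (Suc m) = {R. degree R \<le> m}"
proof
  show "phi_inv ` carrier_vec (Suc m) \<subseteq> {R. degree R \<le> m}"
    by (rule image_subsetI) (metis carrier_vecD degree_phi_inv diff_Suc_1 mem_Collect_eq)
  show "{R. degree R \<le> m} \<subseteq> phi_inv ` carrier_vec (Suc m)"
    using phi_inv_phi by (metis (mono_tags, lifting) carrier_dim_vec dim_phi image_eqI mem_Collect_eq subsetI)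
qed

lemma phi_inv_eq_sum_smult: "phi_inv y = (\<Sum>j<dim_vec y. Polynomial.smult (y $ j) (monom 1 (dim_vec y - 1 - j)))"
  by (simp add: phi_inv_def smult_monom)

lemma linear_map_poly_as_mat:
  fixes F :: "'a::field poly \<Rightarrow> 'a vec"
  assumes add: "\<And>p q. F (p + q) = F p + F q"
    and smult: "\<And>c p. F (Polynomial.smult c p) = c \<cdot>\<^sub>v F p"
    and dim: "\<And>p. dim_vec (F p) = m" and y: "dim_vec y = s"
  shows "mat m s (\<lambda>(i, j). F (monom 1 (s - 1 - j)) $ i) *\<^sub>v y = F (phi_inv y)"
proof (rule eq_vecI)
  fix i assume "i < dim_vec (F (phi_inv y))"
  then have i: "i < m" using dim by simp
  have "F (\<Sum>j\<in>J. Polynomial.smult (c j) (E j)) $ i = (\<Sum>j\<in>J. c j * F (E j) $ i)"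
    if "finite J" for J c E
    using that
  proof (induction J rule: finite_induct)
    case empty
    have "F 0 = 0 \<cdot>\<^sub>v F 0" using smult[of 0 0] by simp
    then show ?case using i dim by (metis index_smult_vec(1) mult_zero_left sum.empty)
  next
    case (insert j J)
    then show ?case using i dim by (simp add: add smult)
  qed
  from this[of "{..<s}" "\<lambda>j. y $ j" "\<lambda>j. monom 1 (s - 1 - j)"]
  show "(mat m s (\<lambda>(i, j). F (monom 1 (s - 1 - j)) $ i) *\<^sub>v y) $ i = F (phi_inv y) $ i"
    using i y by (simp add: phi_inv_eq_sum_smult scalar_prod_def atLeast0LessThan mult.commute)
qed (simp add: dim)

lemma concat_vecs_Nil [simp]: "concat_vecs [] u = u"
  by (simp add: concat_vecs_def)

lemma concat_vecs_Cons [simp]: "concat_vecs (v # us) u = v @\<^sub>v concat_vecs us u"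
  by (simp add: concat_vecs_def)

lemma dim_concat_vecs: "dim_vec (concat_vecs us u) = sum_list (map dim_vec us) + dim_vec u"
  by (induction us) auto

lemma zero_append_vec_zero: "0\<^sub>v m @\<^sub>v 0\<^sub>v n = 0\<^sub>v (m + n)"
  by (intro eq_vecI) auto

lemma concat_vecs_eq_0_iff:
  "concat_vecs us u = 0\<^sub>v (dim_vec (concat_vecs us u)) \<longleftrightarrow>
    (\<forall>v\<in>set us. v = 0\<^sub>v (dim_vec v)) \<and> u = 0\<^sub>v (dim_vec u)"
proof (induction us)
  case (Cons v us)
  let ?w = "concat_vecs us u"
  have "v @\<^sub>v ?w = 0\<^sub>v (dim_vec v) @\<^sub>v 0\<^sub>v (dim_vec ?w) \<longleftrightarrow>
      v = 0\<^sub>v (dim_vec v) \<and> ?w = 0\<^sub>v (dim_vec ?w)"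
    by (intro append_vec_eq carrier_vecI) simp_all
  moreover have "0\<^sub>v (dim_vec (concat_vecs (v # us) u)) = 0\<^sub>v (dim_vec v) @\<^sub>v 0\<^sub>v (dim_vec ?w)"
    by (simp add: zero_append_vec_zero)
  ultimately show ?case
    using Cons.IH by (metis concat_vecs_Cons list.set_intros set_ConsD)
qed simp

lemma concat_vecs_add:
  assumes "\<And>x. x \<in> set xs \<Longrightarrow> dim_vec (f x) = dim_vec (g x)" and "dim_vec u = dim_vec w"
  shows "concat_vecs (map f xs) u + concat_vecs (map g xs) w =
    concat_vecs (map (\<lambda>x. f x + g x) xs) (u + w)"
  using assms
proof (induction xs)
  case (Cons x xs)
  have "map (dim_vec \<circ> f) xs = map (dim_vec \<circ> g) xs"
    using Cons.prems(1) by simp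
  then have "dim_vec (concat_vecs (map g xs) w) = dim_vec (concat_vecs (map f xs) u)"
    using Cons.prems(2) by (metis dim_concat_vecs map_map)
  then have "(f x @\<^sub>v concat_vecs (map f xs) u) + (g x @\<^sub>v concat_vecs (map g xs) w) =
      (f x + g x) @\<^sub>v (concat_vecs (map f xs) u + concat_vecs (map g xs) w)"
    using Cons.prems(1) by (intro append_vec_add carrier_vecI) simp_all
  then show ?case using Cons by simp
qed simp

lemma concat_vecs_smult:
  "c \<cdot>\<^sub>v concat_vecs (map f xs) u = concat_vecs (map (\<lambda>x. c \<cdot>\<^sub>v f x) xs) (c \<cdot>\<^sub>v u)"
proof (induction xs)
  case (Cons x xs)
  have "c \<cdot>\<^sub>v (v @\<^sub>v w) = (c \<cdot>\<^sub>v v) @\<^sub>v (c \<cdot>\<^sub>v w)" for v w :: "'a vec"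
    by (intro eq_vecI) auto
  then show ?case using Cons by simp
qed simp

lemma concat_vecs_split:
  assumes "v \<in> carrier_vec (sum_list ds + m)"
  obtains us u where "length us = length ds" "\<forall>i<length ds. dim_vec (us ! i) = ds ! i"
    "dim_vec u = m" "v = concat_vecs us u"
  using assms
proof (induction ds arbitrary: v thesis)
  case Nil
  then show ?case by (intro Nil.prems(1)[of "[]" v]) auto
next
  case (Cons d ds)
  then have v: "v \<in> carrier_vec (d + (sum_list ds + m))" by (simp add: add.assoc)
  obtain us u where IH: "length us = length ds" "\<forall>i<length ds. dim_vec (us ! i) = ds ! i"
    "dim_vec u = m" "vec_last v (sum_list ds + m) = concat_vecs us u"
    using Cons.IH[of "vec_last v (sum_list ds + m)"] by auto
  have "v = concat_vecs (vec_first v d # us) u"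
    using vec_first_last_append[OF v] IH(4) by simp
  then show ?case
    using Cons.prems(1)[of "vec_first v d # us" u] IH by (auto simp: nth_Cons split: nat.splits)
qed

section \<open>Rank and left kernel of a matrix\<close>

lemma left_kernel_eq_mat_kernel_transpose: "left_kernel M = mat_kernel M\<^sup>T"
proof -
  have "v \<in> left_kernel M \<longleftrightarrow> v \<in> mat_kernel M\<^sup>T" for v
  proof -
    have "M\<^sup>T *\<^sub>v v = 0\<^sub>v (dim_col M) \<longleftrightarrow>
        (\<forall>j<dim_col M. (\<Sum>i<dim_row M. v $ i * M $$ (i, j)) = 0)" if v: "dim_vec v = dim_row M"
    proof -
      have "(M\<^sup>T *\<^sub>v v) $ j = (\<Sum>i<dim_row M. v $ i * M $$ (i, j))" if "j < dim_col M" for j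
        using that v by (simp add: scalar_prod_def atLeast0LessThan mult.commute)
      then show ?thesis by (auto simp: vec_eq_iff)
    qed
    then show ?thesis
      unfolding left_kernel_def mat_kernel_def carrier_vec_def by auto
  qed
  then show ?thesis by blast
qed

lemma (in vec_space) inj_mult_vec_iff_lin_indpt_cols:
  assumes A: "A \<in> carrier_mat n nc"
  shows "(\<forall>v\<in>carrier_vec nc. A *\<^sub>v v = 0\<^sub>v n \<longrightarrow> v = 0\<^sub>v nc) \<longleftrightarrow>
    distinct (cols A) \<and> lin_indpt (set (cols A))"
proof
  assume inj: "\<forall>v\<in>carrier_vec nc. A *\<^sub>v v = 0\<^sub>v n \<longrightarrow> v = 0\<^sub>v nc"
  have "distinct (cols A)"
  proof (rule ccontr)
    assume "\<not> distinct (cols A)"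
    then obtain i j where ij: "i < nc" "j < nc" "i \<noteq> j" "col A i = col A j"
      using A by (auto simp: distinct_conv_nth)
    define v :: "'a vec" where "v = unit_vec nc i - unit_vec nc j"
    have "A *\<^sub>v v = 0\<^sub>v n"
    proof (rule eq_vecI)
      fix l assume l: "l < dim_vec (0\<^sub>v n)"
      have "(A *\<^sub>v v) $ l = row A l \<bullet> unit_vec nc i - row A l \<bullet> unit_vec nc j"
        unfolding v_def using A l by (simp, intro scalar_prod_minus_distrib[of _ nc]) auto
      also have "\<dots> = col A i $ l - col A j $ l"
        using A l ij(1,2) by simp
      finally show "(A *\<^sub>v v) $ l = 0\<^sub>v n $ l"
        using l ij(4) by simp
    qed (use A in simp)
    then have "v = 0\<^sub>v nc"
      using inj v_def by simp
    then have "v $ i = 0"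
      using ij by simp
    then show False
      unfolding v_def using ij by simp
  qed
  moreover have "lin_indpt (set (cols A))"
    using lin_depE[OF A _ \<open>distinct (cols A)\<close>] inj by metis
  ultimately show "distinct (cols A) \<and> lin_indpt (set (cols A))" ..
next
  assume "distinct (cols A) \<and> lin_indpt (set (cols A))"
  then show "\<forall>v\<in>carrier_vec nc. A *\<^sub>v v = 0\<^sub>v n \<longrightarrow> v = 0\<^sub>v nc"
    using lin_depI[OF A] by blast
qed

lemma exists_nonzero_mat_kernel_vec:
  fixes A :: "'a::field mat"
  assumes A: "A \<in> carrier_mat nr nc" and "nr < nc"
  obtains v where "v \<in> carrier_vec nc" "v \<noteq> 0\<^sub>v nc" "A *\<^sub>v v = 0\<^sub>v nr"
proof -
  interpret V: vec_space "TYPE('a)" nr .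
  have "\<not> (distinct (cols A) \<and> V.lin_indpt (set (cols A)))"
  proof
    assume indpt: "distinct (cols A) \<and> V.lin_indpt (set (cols A))"
    have "set (cols A) \<subseteq> carrier_vec nr"
      using A cols_dim by blast
    then have "card (set (cols A)) \<le> nr"
      using V.li_le_dim(2)[OF V.fin_dim] indpt V.dim_is_n by simp
    then show False
      using indpt A \<open>nr < nc\<close> by (simp add: distinct_card)
  qed
  then show ?thesis
    using V.inj_mult_vec_iff_lin_indpt_cols[OF A] that by blast
qed

lemma (in vec_space) mat_kernel_transpose_eq_orthogonal_complement:
  assumes A: "A \<in> carrier_mat n nc"
  shows "mat_kernel A\<^sup>T = orthogonal_complement (set (cols A))"
proof -
  have "A\<^sup>T *\<^sub>v v = 0\<^sub>v nc \<longleftrightarrow> (\<forall>c\<in>set (cols A). v \<bullet> c = 0)" if v: "v \<in> carrier_vec n" for v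
  proof -
    have "A\<^sup>T *\<^sub>v v = 0\<^sub>v nc \<longleftrightarrow> (\<forall>j<nc. v \<bullet> col A j = 0)"
      using A v by (auto simp: vec_eq_iff comm_scalar_prod[of v n])
    then show ?thesis
      using A by (auto simp: cols_def)
  qed
  then show ?thesis
    unfolding orthogonal_complement_def mat_kernel_def using A by auto
qed

lemma (in vec_space) subset_span_maximal_lin_indpt:
  assumes W: "W \<subseteq> carrier_vec n" and S: "maximal S (\<lambda>T. T \<subseteq> W \<and> lin_indpt T)"
  shows "W \<subseteq> span S"
proof
  fix w assume w: "w \<in> W"
  have S_W: "S \<subseteq> W" "lin_indpt S"
    using S unfolding maximal_def by auto
  show "w \<in> span S"
  proof (cases "w \<in> S")
    case True
    then show ?thesis using in_own_span S_W W by blast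
  next
    case False
    then have "lin_dep (insert w S)"
      using S w unfolding maximal_def by blast
    then show ?thesis
      using lin_dep_iff_in_span[of S w] S_W W w False by auto
  qed
qed

lemma (in vec_space) kernel_dim_transpose_inj:
  assumes B: "B \<in> carrier_mat n r"
    and inj: "\<forall>y\<in>carrier_vec r. B *\<^sub>v y = 0\<^sub>v n \<longrightarrow> y = 0\<^sub>v r"
  shows "kernel.dim n B\<^sup>T = n - r"
proof -
  have Bt: "B\<^sup>T \<in> carrier_mat r n" using B by simp
  define G where "G = gauss_jordan_single B\<^sup>T"
  note gj = gauss_jordan_single[OF Bt G_def[symmetric]]
  obtain P Q where PQ: "G = P * B\<^sup>T" "P \<in> carrier_mat r r" "Q \<in> carrier_mat r r" "P * Q = 1\<^sub>m r"
    using gj(4) by blast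
  \<comment> \<open>A zero row of \<open>G = P B\<^sup>T\<close> would give a nonzero vector \<open>row P i\<close> in the kernel of \<open>B\<close>.\<close>
  have "{i. i < r \<and> row G i \<noteq> 0\<^sub>v n} = {i. i < r}"
  proof (rule ccontr)
    assume "{i. i < r \<and> row G i \<noteq> 0\<^sub>v n} \<noteq> {i. i < r}"
    then obtain i where i: "i < r" "row G i = 0\<^sub>v n" by blast
    have y: "row P i \<in> carrier_vec r" using PQ(2) i by auto
    have "B *\<^sub>v row P i = 0\<^sub>v n"
    proof (rule eq_vecI)
      fix j assume j: "j < dim_vec (0\<^sub>v n)"
      have "(B *\<^sub>v row P i) $ j = row P i \<bullet> col B\<^sup>T j"
        using B j y by (simp add: comm_scalar_prod[of _ r])
      also have "\<dots> = G $$ (i, j)" unfolding PQ(1) using PQ(2) Bt i j by simp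
      also have "\<dots> = row G i $ j" using gj(2) i(1) j by simp
      also have "\<dots> = 0" using j by (simp only: i(2)) simp
      finally show "(B *\<^sub>v row P i) $ j = 0\<^sub>v n $ j" using j by simp
    qed (use B in simp)
    moreover have "row P i \<noteq> 0\<^sub>v r"
    proof
      assume "row P i = 0\<^sub>v r"
      then have "(P * Q) $$ (i, i) = 0" using PQ(2,3) i by simp
      then show False using PQ(4) i by simp
    qed
    ultimately show False using inj y by blast
  qed
  then have "kernel.dim n G = n - r"
    using find_base_vectors(6)[OF gj(3) gj(2)] by simp
  moreover have "mat_kernel G = mat_kernel B\<^sup>T"
    unfolding mat_kernel_def using gj(1,2) Bt by auto
  ultimately show ?thesis by simp
qed

lemma (in vec_space) rank_plus_kernel_dim_transpose:
  assumes A: "A \<in> carrier_mat n nc"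
  shows "rank A + kernel.dim n A\<^sup>T = n"
proof -
  let ?P = "\<lambda>T. T \<subseteq> set (cols A) \<and> lin_indpt T"
  have cols_A: "set (cols A) \<subseteq> carrier_vec n"
    using A cols_dim by blast
  obtain S where S: "maximal S ?P"
    using maximal_exists[of ?P "card (set (cols A))" "{}"]
    by (meson List.finite_set card_mono empty_iff empty_subsetI finite_lin_indpt2 rev_finite_subset)
  then have S_A: "S \<subseteq> set (cols A)" "lin_indpt S"
    unfolding maximal_def by auto
  obtain ss where ss: "set ss = S" "distinct ss"
    using finite_distinct_list[of S] S_A(1) finite_subset by blast
  define B where "B = mat_of_cols n ss"
  have B: "B \<in> carrier_mat n (card S)" and cols_B: "cols B = ss"
    using ss S_A cols_A by (auto simp: B_def distinct_card)
  have S_carrier: "S \<subseteq> carrier_vec n"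
    using S_A(1) cols_A by blast
  have "orthogonal_complement (set (cols B)) = orthogonal_complement (span S)"
    using in_orthogonal_complement_span[OF S_carrier] cols_B ss(1) by simp
  also have "\<dots> \<subseteq> orthogonal_complement (set (cols A))"
    by (rule orthogonal_complement_subset[OF subset_span_maximal_lin_indpt[OF cols_A S]])
  finally have "orthogonal_complement (set (cols B)) \<subseteq> orthogonal_complement (set (cols A))" .
  moreover have "orthogonal_complement (set (cols A)) \<subseteq> orthogonal_complement (set (cols B))"
    using orthogonal_complement_subset[OF S_A(1)] cols_B ss(1) by simp
  ultimately have "mat_kernel A\<^sup>T = mat_kernel B\<^sup>T"
    using mat_kernel_transpose_eq_orthogonal_complement A B by auto
  moreover have "kernel.dim n B\<^sup>T = n - card S"
    using kernel_dim_transpose_inj[OF B] inj_mult_vec_iff_lin_indpt_cols[OF B] cols_B ss S_A(2)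
    by simp
  moreover have "rank A = card S"
    using rank_card_indpt[OF A S] .
  moreover have "card S \<le> n"
    using li_le_dim(2)[OF fin_dim _ S_A(2)] dim_is_n S_A(1) cols_A by auto
  ultimately show ?thesis by simp
qed

lemma (in vec_space) kernel_dim_eq_if_mat_kernel_eq_image:
  fixes X B :: "'a mat"
  assumes X: "X \<in> carrier_mat n s"
    and inj: "\<forall>y\<in>carrier_vec s. X *\<^sub>v y = 0\<^sub>v n \<longrightarrow> y = 0\<^sub>v s"
    and ker: "mat_kernel B = (\<lambda>y. X *\<^sub>v y) ` carrier_vec s"
  shows "kernel.dim n B = s"
proof -
  have "mat_kernel B = span (set (cols X))"
    using col_space_eq[OF X] ker X unfolding col_space_def by auto
  then have "kernel.dim n B = rank X"
    unfolding rank_def by simp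
  also have "\<dots> = s"
    using lin_indpt_full_rank[OF X] inj_mult_vec_iff_lin_indpt_cols[OF X] inj by blast
  finally show ?thesis .
qed

section \<open>The left kernel of the matrix M_n\<close>

lemma sum_lessThan_add: "(\<Sum>i<a + b. f i) = (\<Sum>i<a. f i) + (\<Sum>i<b. f (a + i :: nat))"
  by (induction b) (simp_all add: add.assoc)

lemma sum_diff_add_sum:
  "(\<forall>i<k. f i \<le> (n::nat)) \<Longrightarrow> (\<Sum>i<k. n - f i + 1) + (\<Sum>i<k. f i) = k * (n + 1)"
  by (simp add: sum.distrib[symmetric])

lemma all_less_mult_iff:
  "(\<forall>j<k * m. P (j div m) (j mod m)) \<longleftrightarrow> (\<forall>b<k. \<forall>p<m. P b (p :: nat))"
proof safe
  fix b p assume P: "\<forall>j<k * m. P (j div m) (j mod m)" and "b < k" "p < m"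
  then have "b * m + p < k * m"
    by (metis add_less_cancel_left distrib_right less_le_trans mult_1 mult_le_mono1 Suc_leI Suc_eq_plus1)
  then show "P b p"
    using P \<open>p < m\<close> by fastforce
next
  fix j assume "\<forall>b<k. \<forall>p<m. P b p" and "j < k * m"
  moreover have "0 < m"
    using \<open>j < k * m\<close> by (cases m) simp_all
  ultimately show "P (j div m) (j mod m)"
    by (simp add: less_mult_imp_div_less)
qed

lemma dim_S_mat [simp]:
  "dim_row (S_mat \<delta> n P) = n - degree P + 1" "dim_col (S_mat \<delta> n P) = n + 1"
  by (simp_all add: S_mat_def Let_def)

lemma index_S_mat:
  "t < n - degree P + 1 \<Longrightarrow> p < n + 1 \<Longrightarrow>
    S_mat \<delta> n P $$ (t, p) = coeff ((dleft \<delta> ^^ (n - degree P - t)) P) (n - p)"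
  by (simp add: S_mat_def Let_def dmult_monom)

lemma index_S_mat_minus_1:
  assumes "is_derivation \<delta>" and "t < n + 1" "p < n + 1"
  shows "S_mat \<delta> n (-1) $$ (t, p) = (if t = p then -1 else 0)"
proof -
  have "(dleft \<delta> ^^ (n - t)) (-1) = monom (-1) (n - t)"
    using dleft_pow_monom_const[OF assms(1) derivation_minus_1[OF assms(1)], of "n - t" 0]
    by (simp add: monom_0 one_pCons)
  then show ?thesis
    using index_S_mat[of t n "-1" p \<delta>] assms(2,3) by (auto simp: coeff_monom)
qed

definition row_comb :: "'a::comm_ring_1 vec \<Rightarrow> 'a vec list \<Rightarrow> nat \<Rightarrow> 'a" where
  "row_comb a rs j = (\<Sum>i<length rs. a $ i * rs ! i $ j)"

lemma row_comb_map_upt: "row_comb w (map f [0..<m]) j = (\<Sum>t<m. w $ t * f t $ j)"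
  unfolding row_comb_def by (rule sum.cong) auto

lemma row_comb_append:
  "dim_vec a = length rs1 \<Longrightarrow> dim_vec b = length rs2 \<Longrightarrow>
    row_comb (a @\<^sub>v b) (rs1 @ rs2) j = row_comb a rs1 j + row_comb b rs2 j"
  unfolding row_comb_def by (simp add: sum_lessThan_add nth_append)

lemma row_comb_concat:
  "length us = length rbs \<Longrightarrow> (\<forall>b<length us. dim_vec (us ! b) = length (rbs ! b)) \<Longrightarrow>
    dim_vec u = length rs \<Longrightarrow>
    row_comb (concat_vecs us u) (concat rbs @ rs) j =
      (\<Sum>b<length us. row_comb (us ! b) (rbs ! b) j) + row_comb u rs j"
proof (induction us rbs rule: list_induct2)
  case (Cons x xs y ys)
  have dims: "\<forall>b<length xs. dim_vec (xs ! b) = length (ys ! b)"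
    using Cons.prems(1) by force
  have "dim_vec (concat_vecs xs u) = length (concat ys @ rs)"
    using Cons dims by (auto simp: dim_concat_vecs length_concat intro!: arg_cong[where f = sum_list] nth_equalityI)
  moreover have "dim_vec x = length y"
    using Cons.prems(1) by force
  ultimately show ?case
    using Cons dims by (simp add: row_comb_append sum.lessThan_Suc_shift del: sum.lessThan_Suc)
qed simp

definition M_block_rows :: "('a::field \<Rightarrow> 'a) \<Rightarrow> nat \<Rightarrow> 'a poly list \<Rightarrow> nat \<Rightarrow> 'a vec list" where
  "M_block_rows \<delta> n Ls i = map (\<lambda>t. vec (length Ls * (n + 1))
      (\<lambda>b. if b div (n + 1) = i then S_mat \<delta> n (Ls ! i) $$ (t, b mod (n + 1)) else 0))
    [0..<dim_row (S_mat \<delta> n (Ls ! i))]"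

definition M_last_rows :: "('a::field \<Rightarrow> 'a) \<Rightarrow> nat \<Rightarrow> 'a poly list \<Rightarrow> 'a vec list" where
  "M_last_rows \<delta> n Ls = map (\<lambda>t. vec (length Ls * (n + 1))
      (\<lambda>b. S_mat \<delta> n (-1) $$ (t, b mod (n + 1)))) [0..<n + 1]"

lemma M_mat_eq_mat_of_rows: "M_mat \<delta> n Ls = mat_of_rows (length Ls * (n + 1))
    (concat (map (M_block_rows \<delta> n Ls) [0..<length Ls]) @ M_last_rows \<delta> n Ls)"
  unfolding M_mat_def Let_def M_block_rows_def[abs_def] M_last_rows_def ..

lemma dim_M_mat:
  "dim_col (M_mat \<delta> n Ls) = length Ls * (n + 1)"
  "dim_row (M_mat \<delta> n Ls) = (\<Sum>i<length Ls. n - degree (Ls ! i) + 1) + (n + 1)"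
  by (simp_all add: M_mat_eq_mat_of_rows M_block_rows_def M_last_rows_def length_concat
      sum_list_sum_nth atLeast0LessThan)

lemma coeff_dmult_phi_inv: "coeff (dmult \<delta> (phi_inv w) L) q =
    (\<Sum>t<dim_vec w. w $ t * coeff ((dleft \<delta> ^^ (dim_vec w - 1 - t)) L) q)"
  by (simp add: phi_inv_def dmult_sum_left dmult_monom coeff_sum)

lemma row_comb_M_block_rows:
  assumes w: "dim_vec w = n - degree (Ls ! i) + 1" and j: "j < length Ls * (n + 1)"
  shows "row_comb w (M_block_rows \<delta> n Ls i) j =
    (if j div (n + 1) = i then coeff (dmult \<delta> (phi_inv w) (Ls ! i)) (n - j mod (n + 1)) else 0)"
proof -
  let ?S = "S_mat \<delta> n (Ls ! i)" and ?p = "j mod (n + 1)"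
  have "row_comb w (M_block_rows \<delta> n Ls i) j =
      (\<Sum>t<dim_vec w. w $ t * (if j div (n + 1) = i then ?S $$ (t, ?p) else 0))"
    unfolding M_block_rows_def dim_S_mat w[symmetric] row_comb_map_upt
    using j by (intro sum.cong) simp_all
  also have "\<dots> = (if j div (n + 1) = i then
      (\<Sum>t<dim_vec w. w $ t * coeff ((dleft \<delta> ^^ (dim_vec w - 1 - t)) (Ls ! i)) (n - ?p)) else 0)"
    using index_S_mat[of _ n "Ls ! i" ?p \<delta>] w by (auto intro!: sum.cong)
  finally show ?thesis by (simp add: coeff_dmult_phi_inv)
qed

lemma row_comb_M_last_rows:
  assumes "is_derivation \<delta>" and u: "dim_vec u = n + 1" and "j < length Ls * (n + 1)"
  shows "row_comb u (M_last_rows \<delta> n Ls) j = - u $ (j mod (n + 1))"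
proof -
  have "row_comb u (M_last_rows \<delta> n Ls) j =
      (\<Sum>t<n + 1. if t = j mod (n + 1) then - u $ t else 0)"
    unfolding M_last_rows_def row_comb_map_upt
    using assms by (intro sum.cong) (auto simp: index_S_mat_minus_1)
  then show ?thesis by (simp only: sum.delta finite_lessThan) simp
qed

lemma dim_concat_vecs_eq_dim_row_M_mat:
  assumes "\<forall>i<length Ls. degree (Ls ! i) \<le> n" and "length us = length Ls"
    and "\<forall>i<length Ls. dim_vec (us ! i) = n + 1 - degree (Ls ! i)" and "dim_vec u = n + 1"
  shows "dim_vec (concat_vecs us u) = dim_row (M_mat \<delta> n Ls)"
proof -
  have "sum_list (map dim_vec us) = (\<Sum>i<length Ls. n - degree (Ls ! i) + 1)"
    using assms by (auto simp: sum_list_sum_nth atLeast0LessThan intro!: sum.cong)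
  then show ?thesis by (simp add: dim_concat_vecs dim_M_mat assms(4))
qed

lemma split_vec_dim_row_M_mat:
  assumes r: "\<forall>i<length Ls. degree (Ls ! i) \<le> n" and v: "dim_vec v = dim_row (M_mat \<delta> n Ls)"
  obtains us u where "length us = length Ls"
    "\<forall>i<length Ls. dim_vec (us ! i) = n + 1 - degree (Ls ! i)" "dim_vec u = n + 1"
    "v = concat_vecs us u"
proof -
  let ?ds = "map (\<lambda>i. n + 1 - degree (Ls ! i)) [0..<length Ls]"
  have "sum_list ?ds = (\<Sum>i<length Ls. n - degree (Ls ! i) + 1)"
    unfolding interv_sum_list_conv_sum_set_nat set_upt atLeast0LessThan
    using r by (intro sum.cong refl) (simp add: Suc_diff_le)
  then have "v \<in> carrier_vec (sum_list ?ds + (n + 1))"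
    by (intro carrier_vecI) (simp only: v dim_M_mat)
  then obtain us u where "length us = length ?ds" "\<forall>i<length ?ds. dim_vec (us ! i) = ?ds ! i"
      "dim_vec u = n + 1" "v = concat_vecs us u"
    by (rule concat_vecs_split)
  then show ?thesis
    using that by simp
qed

lemma column_comb_M_mat:
  assumes d: "is_derivation \<delta>" and r: "\<forall>i<length Ls. degree (Ls ! i) \<le> n"
    and us: "length us = length Ls" "\<forall>i<length Ls. dim_vec (us ! i) = n + 1 - degree (Ls ! i)"
    and u: "dim_vec u = n + 1" and j: "j < length Ls * (n + 1)"
  shows "(\<Sum>i<dim_row (M_mat \<delta> n Ls). concat_vecs us u $ i * M_mat \<delta> n Ls $$ (i, j)) =
    coeff (dmult \<delta> (phi_inv (us ! (j div (n + 1)))) (Ls ! (j div (n + 1)))) (n - j mod (n + 1))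
      - u $ (j mod (n + 1))"
proof -
  let ?b = "j div (n + 1)" and ?p = "j mod (n + 1)"
  define rbs where "rbs = map (M_block_rows \<delta> n Ls) [0..<length Ls]"
  define rows where "rows = concat rbs @ M_last_rows \<delta> n Ls"
  have M: "M_mat \<delta> n Ls = mat_of_rows (length Ls * (n + 1)) rows"
    unfolding rows_def rbs_def by (rule M_mat_eq_mat_of_rows)
  have "(\<Sum>i<dim_row (M_mat \<delta> n Ls). concat_vecs us u $ i * M_mat \<delta> n Ls $$ (i, j)) =
      row_comb (concat_vecs us u) rows j"
    unfolding row_comb_def M using j by (intro sum.cong) (auto simp: mat_of_rows_index)
  also have "\<dots> = (\<Sum>b<length us. row_comb (us ! b) (rbs ! b) j) + row_comb u (M_last_rows \<delta> n Ls) j"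
    unfolding rows_def
    by (rule row_comb_concat) (use us u r in \<open>auto simp: rbs_def M_block_rows_def M_last_rows_def\<close>)
  also have "(\<Sum>b<length us. row_comb (us ! b) (rbs ! b) j) =
      (\<Sum>b<length Ls. if ?b = b then coeff (dmult \<delta> (phi_inv (us ! b)) (Ls ! b)) (n - ?p) else 0)"
  proof (rule sum.cong)
    fix b assume b: "b \<in> {..<length Ls}"
    then have "dim_vec (us ! b) = n - degree (Ls ! b) + 1"
      using us r by (simp add: Suc_diff_le)
    then show "row_comb (us ! b) (rbs ! b) j =
        (if ?b = b then coeff (dmult \<delta> (phi_inv (us ! b)) (Ls ! b)) (n - ?p) else 0)"
      using row_comb_M_block_rows[OF _ j] b by (simp add: rbs_def)
  qed (simp add: us)
  also have "\<dots> = coeff (dmult \<delta> (phi_inv (us ! ?b)) (Ls ! ?b)) (n - ?p)"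
    using j less_mult_imp_div_less[of j "length Ls" "n + 1"] by simp
  finally show ?thesis
    using row_comb_M_last_rows[OF d u j] by simp
qed

lemma concat_vecs_in_left_kernel_M_mat_iff:
  assumes d: "is_derivation \<delta>" and r: "\<forall>i<length Ls. degree (Ls ! i) \<le> n"
    and us: "length us = length Ls" "\<forall>i<length Ls. dim_vec (us ! i) = n + 1 - degree (Ls ! i)"
    and u: "dim_vec u = n + 1"
  shows "concat_vecs us u \<in> left_kernel (M_mat \<delta> n Ls) \<longleftrightarrow>
    (\<forall>i<length Ls. phi_inv u = dmult \<delta> (phi_inv (us ! i)) (Ls ! i))"
proof -
  let ?D = "\<lambda>i. dmult \<delta> (phi_inv (us ! i)) (Ls ! i)"
  have "concat_vecs us u \<in> left_kernel (M_mat \<delta> n Ls) \<longleftrightarrow>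
      (\<forall>j<length Ls * (n + 1). coeff (?D (j div (n + 1))) (n - j mod (n + 1)) = u $ (j mod (n + 1)))"
    unfolding left_kernel_def
    using dim_concat_vecs_eq_dim_row_M_mat[OF r us u] column_comb_M_mat[OF d r us u]
    by (simp add: dim_M_mat)
  also have "\<dots> \<longleftrightarrow> (\<forall>i<length Ls. \<forall>p<n + 1. coeff (?D i) (n - p) = u $ p)"
    by (rule all_less_mult_iff)
  also have "\<dots> \<longleftrightarrow> (\<forall>i<length Ls. phi_inv u = ?D i)"
  proof -
    have "degree (?D i) \<le> n" if "i < length Ls" for i
    proof -
      have "degree (?D i) \<le> degree (phi_inv (us ! i)) + degree (Ls ! i)"
        by (rule degree_dmult_le[of \<delta>, OF derivation_0[OF d]])
      also have "\<dots> \<le> n"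
        using degree_phi_inv[of "us ! i"] us r that by (simp add: le_diff_conv2)
      finally show ?thesis .
    qed
    then show ?thesis
      using phi_inv_eq_iff_coeffs[of u n] u by auto
  qed
  finally show ?thesis .
qed

definition cofactor_vec :: "nat \<Rightarrow> 'a::field poly list \<Rightarrow> 'a poly list \<Rightarrow> 'a poly \<Rightarrow> 'a vec" where
  "cofactor_vec n Ls Qs L =
    concat_vecs (map (\<lambda>i. phi (n - degree (Ls ! i)) (Qs ! i)) [0..<length Ls]) (phi n L)"

lemma cofactor_vec_map_upt: "cofactor_vec n Ls (map f [0..<length Ls]) L =
    concat_vecs (map (\<lambda>i. phi (n - degree (Ls ! i)) (f i)) [0..<length Ls]) (phi n L)"
  unfolding cofactor_vec_def by (intro arg_cong2[where f = concat_vecs] map_cong) auto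

lemma cofactor_vec_add:
  "cofactor_vec n Ls (map f [0..<length Ls]) L + cofactor_vec n Ls (map g [0..<length Ls]) L' =
    cofactor_vec n Ls (map (\<lambda>i. f i + g i) [0..<length Ls]) (L + L')"
  unfolding cofactor_vec_map_upt by (subst concat_vecs_add) (simp_all add: phi_add)

lemma cofactor_vec_smult:
  "c \<cdot>\<^sub>v cofactor_vec n Ls (map f [0..<length Ls]) L =
    cofactor_vec n Ls (map (\<lambda>i. Polynomial.smult c (f i)) [0..<length Ls]) (Polynomial.smult c L)"
  unfolding cofactor_vec_map_upt by (simp add: concat_vecs_smult phi_smult comp_def)

lemma cofactor_vec_eq_0D:
  assumes "cofactor_vec n Ls Qs L = 0\<^sub>v m"
  shows "phi n L = 0\<^sub>v (n + 1)"
proof -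
  have "cofactor_vec n Ls Qs L = 0\<^sub>v (dim_vec (cofactor_vec n Ls Qs L))"
    using assms by simp
  then show ?thesis
    unfolding cofactor_vec_def concat_vecs_eq_0_iff by simp
qed

lemma degree_left_cofactor_le:
  assumes "\<delta> 0 = 0" and "P \<noteq> 0" and "L = dmult \<delta> Q P" and "degree L \<le> n"
  shows "degree Q \<le> n - degree P"
  using degree_dmult[of \<delta> Q P, OF assms(1) _ assms(2)] assms(3,4) by (cases "Q = 0") simp_all

lemma cofactor_vec_in_left_kernel:
  assumes d: "is_derivation \<delta>" and nz: "\<forall>i<length Ls. Ls ! i \<noteq> 0"
    and r: "\<forall>i<length Ls. degree (Ls ! i) \<le> n"
    and Qs: "length Qs = length Ls" "\<forall>i<length Ls. L = dmult \<delta> (Qs ! i) (Ls ! i)"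
    and L: "degree L \<le> n"
  shows "cofactor_vec n Ls Qs L \<in> left_kernel (M_mat \<delta> n Ls)"
proof -
  let ?us = "map (\<lambda>i. phi (n - degree (Ls ! i)) (Qs ! i)) [0..<length Ls]"
  have "phi_inv (phi n L) = dmult \<delta> (phi_inv (?us ! i)) (Ls ! i)" if i: "i < length Ls" for i
  proof -
    have "phi_inv (?us ! i) = Qs ! i"
      using degree_left_cofactor_le[of \<delta>, OF derivation_0[OF d]] nz Qs L i by (simp add: phi_inv_phi)
    then show ?thesis
      using phi_inv_phi[OF L] Qs(2) i by simp
  qed
  then show ?thesis
    unfolding cofactor_vec_def
    using concat_vecs_in_left_kernel_M_mat_iff[OF d r, of ?us "phi n L"] r
    by (simp add: Suc_diff_le del: upt_Suc)
qed

lemma left_kernel_M_mat_common_left_multiple: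
  assumes d: "is_derivation \<delta>" and nz: "\<forall>i<length Ls. Ls ! i \<noteq> 0"
    and r: "\<forall>i<length Ls. degree (Ls ! i) \<le> n"
    and us: "length us = length Ls" "\<forall>i<length Ls. dim_vec (us ! i) = n + 1 - degree (Ls ! i)"
    and u: "dim_vec u = n + 1"
    and ker: "concat_vecs us u \<in> left_kernel (M_mat \<delta> n Ls)"
    and nonzero: "concat_vecs us u \<noteq> 0\<^sub>v (dim_vec (concat_vecs us u))"
  shows "u \<noteq> 0\<^sub>v (n + 1)" and "\<forall>i<length Ls. phi_inv u = dmult \<delta> (phi_inv (us ! i)) (Ls ! i)"
proof -
  show eqs: "\<forall>i<length Ls. phi_inv u = dmult \<delta> (phi_inv (us ! i)) (Ls ! i)"
    using concat_vecs_in_left_kernel_M_mat_iff[OF d r us u] ker by blast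
  show "u \<noteq> 0\<^sub>v (n + 1)"
  proof
    assume "u = 0\<^sub>v (n + 1)"
    then have "phi_inv u = 0" by simp
    then have "phi_inv (us ! i) = 0" if "i < length Ls" for i
      using eqs nz that dmult_eq_0_iff[of \<delta>, OF derivation_0[OF d]] by metis
    then have "\<forall>v\<in>set us. v = 0\<^sub>v (dim_vec v)"
      using us(1) by (auto simp: in_set_conv_nth phi_inv_eq_0_iff)
    then show False
      using nonzero \<open>u = 0\<^sub>v (n + 1)\<close> concat_vecs_eq_0_iff by fastforce
  qed
qed

section \<open>The order of the LCLM\<close>

lemma exists_nonzero_common_left_multiple:
  assumes d: "is_derivation \<delta>" and nz: "\<forall>i<length Ls. Ls ! i \<noteq> 0"
  obtains L where "L \<noteq> 0" "common_left_multiple \<delta> Ls L"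
proof -
  define n where "n = (\<Sum>i<length Ls. degree (Ls ! i))"
  have r: "\<forall>i<length Ls. degree (Ls ! i) \<le> n"
    unfolding n_def by (auto intro: member_le_sum)
  let ?M = "M_mat \<delta> n Ls"
  have "length Ls * (n + 1) < dim_row ?M"
    using sum_diff_add_sum[of "length Ls" "\<lambda>i. degree (Ls ! i)" n] r
    by (simp add: dim_M_mat n_def[symmetric])
  moreover have "?M\<^sup>T \<in> carrier_mat (length Ls * (n + 1)) (dim_row ?M)"
    by (simp add: dim_M_mat carrier_matI)
  ultimately obtain v where v: "v \<in> carrier_vec (dim_row ?M)" "v \<noteq> 0\<^sub>v (dim_row ?M)"
      "?M\<^sup>T *\<^sub>v v = 0\<^sub>v (length Ls * (n + 1))"
    using exists_nonzero_mat_kernel_vec by blast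
  then have ker: "v \<in> left_kernel ?M"
    by (simp add: left_kernel_eq_mat_kernel_transpose mat_kernel_def dim_M_mat)
  obtain us u where us: "length us = length Ls"
      "\<forall>i<length Ls. dim_vec (us ! i) = n + 1 - degree (Ls ! i)" and u: "dim_vec u = n + 1"
      and split: "v = concat_vecs us u"
    using split_vec_dim_row_M_mat[OF r] v(1) by (metis carrier_vecD)
  have "u \<noteq> 0\<^sub>v (n + 1)" "\<forall>i<length Ls. phi_inv u = dmult \<delta> (phi_inv (us ! i)) (Ls ! i)"
    using left_kernel_M_mat_common_left_multiple[OF d nz r us u] ker v split by auto
  then show ?thesis
    using that[of "phi_inv u"] u unfolding common_left_multiple_def by (auto simp: phi_inv_eq_0_iff)
qed

lemma lclm_exists:
  assumes d: "is_derivation \<delta>" and nz: "\<forall>i<length Ls. Ls ! i \<noteq> 0"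
  obtains Lm P where "Lm \<noteq> 0" "degree Lm = ord_lclm \<delta> Ls"
    "\<forall>i<length Ls. Lm = dmult \<delta> (P i) (Ls ! i)"
proof -
  obtain L where "L \<noteq> 0" "common_left_multiple \<delta> Ls L"
    using exists_nonzero_common_left_multiple[OF d nz] .
  then obtain Lm where Lm: "Lm \<noteq> 0" "common_left_multiple \<delta> Ls Lm" "degree Lm = ord_lclm \<delta> Ls"
    by (rule ord_lclm_attained)
  then obtain P where "\<forall>i<length Ls. Lm = dmult \<delta> (P i) (Ls ! i)"
    unfolding common_left_multiple_def by metis
  with Lm that show ?thesis by blast
qed

lemma degree_le_ord_lclm:
  assumes d: "is_derivation \<delta>" and nz: "\<forall>i<length Ls. Ls ! i \<noteq> 0" and i: "i < length Ls"
  shows "degree (Ls ! i) \<le> ord_lclm \<delta> Ls"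
proof -
  obtain Lm P where Lm: "Lm \<noteq> 0" "degree Lm = ord_lclm \<delta> Ls"
      "\<forall>i<length Ls. Lm = dmult \<delta> (P i) (Ls ! i)"
    using lclm_exists[OF d nz] .
  then have "P i \<noteq> 0"
    using i by auto
  then show ?thesis
    using degree_dmult[of \<delta> "P i" "Ls ! i", OF derivation_0[OF d]] Lm i nz by simp
qed

lemma cofactor_vec_dmult_in_left_kernel:
  assumes d: "is_derivation \<delta>" and nz: "\<forall>i<length Ls. Ls ! i \<noteq> 0"
    and r: "\<forall>i<length Ls. degree (Ls ! i) \<le> n"
    and P: "\<forall>i<length Ls. Lm = dmult \<delta> (P i) (Ls ! i)"
    and R: "degree R \<le> n - degree Lm" and Lm: "degree Lm \<le> n"
  shows "cofactor_vec n Ls (map (\<lambda>i. dmult \<delta> R (P i)) [0..<length Ls]) (dmult \<delta> R Lm)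
    \<in> left_kernel (M_mat \<delta> n Ls)"
proof (rule cofactor_vec_in_left_kernel[OF d nz r])
  show "\<forall>i<length Ls. dmult \<delta> R Lm =
      dmult \<delta> (map (\<lambda>i. dmult \<delta> R (P i)) [0..<length Ls] ! i) (Ls ! i)"
    using P by (simp add: dmult_assoc[OF d])
  show "degree (dmult \<delta> R Lm) \<le> n"
    using degree_dmult_le[of \<delta> R Lm, OF derivation_0[OF d]] R Lm by simp
qed simp

lemma left_kernel_M_mat_subset:
  assumes d: "is_derivation \<delta>" and nz: "\<forall>i<length Ls. Ls ! i \<noteq> 0"
    and r: "\<forall>i<length Ls. degree (Ls ! i) \<le> n"
    and Lm: "Lm \<noteq> 0" "degree Lm = ord_lclm \<delta> Ls"
    and P: "\<forall>i<length Ls. Lm = dmult \<delta> (P i) (Ls ! i)"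
    and v: "v \<in> left_kernel (M_mat \<delta> n Ls)"
  obtains R where "degree R \<le> n - degree Lm"
    "v = cofactor_vec n Ls (map (\<lambda>i. dmult \<delta> R (P i)) [0..<length Ls]) (dmult \<delta> R Lm)"
proof -
  have d0: "\<delta> 0 = 0" by (rule derivation_0[OF d])
  obtain us u where us: "length us = length Ls"
      "\<forall>i<length Ls. dim_vec (us ! i) = n + 1 - degree (Ls ! i)"
      and u: "dim_vec u = n + 1" and v_eq: "v = concat_vecs us u"
    using split_vec_dim_row_M_mat[OF r] v unfolding left_kernel_def by blast
  have eqs: "\<forall>i<length Ls. phi_inv u = dmult \<delta> (phi_inv (us ! i)) (Ls ! i)"
    using concat_vecs_in_left_kernel_M_mat_iff[OF d r us u] v v_eq by blast
  then have "common_left_multiple \<delta> Ls (phi_inv u)"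
    unfolding common_left_multiple_def by blast
  moreover have "common_left_multiple \<delta> Ls Lm"
    using P unfolding common_left_multiple_def by blast
  ultimately obtain R where R: "phi_inv u = dmult \<delta> R Lm"
    using common_left_multiple_right_dvd[OF d Lm(1) _ Lm(2)] by blast
  have "degree R \<le> n - degree Lm"
    using degree_left_cofactor_le[of \<delta>, OF d0 Lm(1) R] degree_phi_inv[of u] u by simp
  moreover have "us ! i = phi (n - degree (Ls ! i)) (dmult \<delta> R (P i))" if i: "i < length Ls" for i
  proof -
    have "dmult \<delta> (phi_inv (us ! i)) (Ls ! i) = dmult \<delta> (dmult \<delta> R (P i)) (Ls ! i)"
      using eqs R P i by (simp add: dmult_assoc[OF d])
    then have "phi_inv (us ! i) = dmult \<delta> R (P i)"
      using dmult_right_cancel[of \<delta>, OF d0] nz i by blast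
    then show ?thesis
      using phi_phi_inv[of "us ! i" "n - degree (Ls ! i)"] us r i by (simp add: Suc_diff_le)
  qed
  then have "us = map (\<lambda>i. phi (n - degree (Ls ! i)) (dmult \<delta> R (P i))) [0..<length Ls]"
    using us(1) by (intro nth_equalityI) simp_all
  moreover have "u = phi n (dmult \<delta> R Lm)"
    using R phi_phi_inv[of u n] u by simp
  ultimately show ?thesis
    using that v_eq by (simp add: cofactor_vec_map_upt)
qed

lemma left_kernel_M_mat_eq_image:
  assumes d: "is_derivation \<delta>" and nz: "\<forall>i<length Ls. Ls ! i \<noteq> 0"
    and r: "\<forall>i<length Ls. degree (Ls ! i) \<le> n"
    and Lm: "Lm \<noteq> 0" "degree Lm = ord_lclm \<delta> Ls" "degree Lm \<le> n"
    and P: "\<forall>i<length Ls. Lm = dmult \<delta> (P i) (Ls ! i)"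
  shows "left_kernel (M_mat \<delta> n Ls) =
    (\<lambda>R. cofactor_vec n Ls (map (\<lambda>i. dmult \<delta> R (P i)) [0..<length Ls]) (dmult \<delta> R Lm))
      ` {R. degree R \<le> n - degree Lm}"
proof
  show "left_kernel (M_mat \<delta> n Ls) \<subseteq> (\<lambda>R. cofactor_vec n Ls
      (map (\<lambda>i. dmult \<delta> R (P i)) [0..<length Ls]) (dmult \<delta> R Lm)) ` {R. degree R \<le> n - degree Lm}"
  proof
    fix v assume "v \<in> left_kernel (M_mat \<delta> n Ls)"
    then obtain R where "degree R \<le> n - degree Lm"
        "v = cofactor_vec n Ls (map (\<lambda>i. dmult \<delta> R (P i)) [0..<length Ls]) (dmult \<delta> R Lm)"
      by (rule left_kernel_M_mat_subset[OF d nz r Lm(1,2) P])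
    then show "v \<in> (\<lambda>R. cofactor_vec n Ls (map (\<lambda>i. dmult \<delta> R (P i)) [0..<length Ls])
        (dmult \<delta> R Lm)) ` {R. degree R \<le> n - degree Lm}" by blast
  qed
qed (use cofactor_vec_dmult_in_left_kernel[OF d nz r P] Lm(3) in auto)

lemma kernel_dim_transpose_M_mat:
  assumes d: "is_derivation \<delta>" and nz: "\<forall>i<length Ls. Ls ! i \<noteq> 0" and n: "ord_lclm \<delta> Ls \<le> n"
  shows "kernel.dim (dim_row (M_mat \<delta> n Ls)) (M_mat \<delta> n Ls)\<^sup>T = n - ord_lclm \<delta> Ls + 1"
proof -
  obtain Lm P where Lm: "Lm \<noteq> 0" "degree Lm = ord_lclm \<delta> Ls"
      and P: "\<forall>i<length Ls. Lm = dmult \<delta> (P i) (Ls ! i)"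
    using lclm_exists[OF d nz] .
  have r: "\<forall>i<length Ls. degree (Ls ! i) \<le> n"
    using degree_le_ord_lclm[OF d nz] n le_trans by blast
  let ?M = "M_mat \<delta> n Ls" and ?N = "dim_row (M_mat \<delta> n Ls)" and ?s = "n - degree Lm + 1"
  define Psi where "Psi R = cofactor_vec n Ls (map (\<lambda>i. dmult \<delta> R (P i)) [0..<length Ls])
    (dmult \<delta> R Lm)" for R
  define X where "X = mat ?N ?s (\<lambda>(i, j). Psi (monom 1 (?s - 1 - j)) $ i)"
  have X: "X \<in> carrier_mat ?N ?s"
    by (simp add: X_def)
  have dim_Psi: "dim_vec (Psi R) = ?N" for R
    unfolding Psi_def cofactor_vec_def
    by (rule dim_concat_vecs_eq_dim_row_M_mat[OF r]) (use r in \<open>simp_all add: Suc_diff_le\<close>)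
  have X_Psi: "X *\<^sub>v y = Psi (phi_inv y)" if "y \<in> carrier_vec ?s" for y
    unfolding X_def using that
    by (intro linear_map_poly_as_mat dim_Psi)
      (simp_all add: Psi_def cofactor_vec_add cofactor_vec_smult dmult_add_left dmult_smult_left)
  have "mat_kernel ?M\<^sup>T = Psi ` {R. degree R \<le> n - degree Lm}"
    unfolding left_kernel_eq_mat_kernel_transpose[symmetric] Psi_def
    by (rule left_kernel_M_mat_eq_image[OF d nz r Lm _ P]) (simp add: Lm(2) n)
  also have "\<dots> = Psi ` phi_inv ` carrier_vec ?s"
    unfolding Suc_eq_plus1[symmetric] phi_inv_image_carrier_vec ..
  also have "\<dots> = (\<lambda>y. X *\<^sub>v y) ` carrier_vec ?s"
    unfolding image_image using X_Psi by (rule image_cong[OF refl, symmetric])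
  finally have ker: "mat_kernel ?M\<^sup>T = (\<lambda>y. X *\<^sub>v y) ` carrier_vec ?s" .
  have inj: "y = 0\<^sub>v ?s" if y: "y \<in> carrier_vec ?s" and Xy: "X *\<^sub>v y = 0\<^sub>v ?N" for y
  proof -
    have "phi n (dmult \<delta> (phi_inv y) Lm) = 0\<^sub>v (n + 1)"
      using cofactor_vec_eq_0D X_Psi[OF y] Xy by (metis Psi_def)
    moreover have "degree (dmult \<delta> (phi_inv y) Lm) \<le> n"
      using degree_dmult_le[of \<delta> "phi_inv y" Lm, OF derivation_0[OF d]] degree_phi_inv[of y] y Lm n
      by auto
    ultimately have "dmult \<delta> (phi_inv y) Lm = 0"
      by (metis phi_inv_phi phi_inv_zero_vec)
    then have "phi_inv y = 0"
      using dmult_eq_0_iff[of \<delta>, OF derivation_0[OF d]] Lm(1) by blast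
    then have "y = 0\<^sub>v (dim_vec y)"
      using phi_inv_eq_0_iff by blast
    then show ?thesis
      using y by (metis carrier_vecD)
  qed
  interpret N: vec_space "TYPE('a)" ?N .
  show ?thesis
    using N.kernel_dim_eq_if_mat_kernel_eq_image[OF X _ ker] inj Lm(2) by simp
qed

lemma ord_lclm_eq_rank_M_mat:
  assumes d: "is_derivation \<delta>" and nz: "\<forall>i<length Ls. Ls ! i \<noteq> 0" and n: "ord_lclm \<delta> Ls \<le> n"
  shows "mat_rank (M_mat \<delta> n Ls) + (\<Sum>i<length Ls. degree (Ls ! i)) =
    length Ls * (n + 1) + ord_lclm \<delta> Ls"
proof -
  let ?M = "M_mat \<delta> n Ls"
  interpret N: vec_space "TYPE('a)" "dim_row ?M" .
  have "?M \<in> carrier_mat (dim_row ?M) (dim_col ?M)"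
    by (rule carrier_matI) simp_all
  then have "N.rank ?M + kernel.dim (dim_row ?M) ?M\<^sup>T = dim_row ?M"
    by (rule N.rank_plus_kernel_dim_transpose)
  then have rank: "mat_rank ?M + (n - ord_lclm \<delta> Ls + 1) = dim_row ?M"
    unfolding mat_rank_def kernel_dim_transpose_M_mat[OF d nz n] .
  have "\<forall>i<length Ls. degree (Ls ! i) \<le> n"
    using degree_le_ord_lclm[OF d nz] n le_trans by blast
  then have "(\<Sum>i<length Ls. n - degree (Ls ! i) + 1) + (\<Sum>i<length Ls. degree (Ls ! i)) =
      length Ls * (n + 1)"
    by (rule sum_diff_add_sum)
  then show ?thesis
    using rank dim_M_mat(2)[of \<delta> n Ls] n by linarith
qed

theorem theorem3:
  fixes \<delta> :: "'a::field \<Rightarrow> 'a" and Ls :: "'a poly list" and n :: nat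
  assumes deriv: "is_derivation \<delta>"
    and nonempty: "Ls \<noteq> []"
    and nonzero: "\<forall>i<length Ls. Ls ! i \<noteq> 0"
    and n_ge: "n \<ge> ord_lclm \<delta> Ls"
  shows
    "(\<forall>L Qs. common_left_multiple \<delta> Ls L \<and> degree L \<le> n \<and> length Qs = length Ls \<and>
        (\<forall>i<length Ls. L = dmult \<delta> (Qs ! i) (Ls ! i)) \<longrightarrow>
        concat_vecs (map (\<lambda>i. phi (n - degree (Ls ! i)) (Qs ! i)) [0..<length Ls]) (phi n L)
          \<in> left_kernel (M_mat \<delta> n Ls))
   \<and> (\<forall>us u. length us = length Ls \<and>
        (\<forall>i<length Ls. dim_vec (us ! i) = n + 1 - degree (Ls ! i)) \<and> dim_vec u = n + 1 \<and>
        concat_vecs us u \<noteq> 0\<^sub>v (dim_vec (concat_vecs us u)) \<and>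
        concat_vecs us u \<in> left_kernel (M_mat \<delta> n Ls) \<longrightarrow>
        u \<noteq> 0\<^sub>v (n + 1) \<and>
        common_left_multiple \<delta> Ls (phi_inv u) \<and>
        (\<forall>i<length Ls. phi_inv u = dmult \<delta> (phi_inv (us ! i)) (Ls ! i)))
   \<and> int (ord_lclm \<delta> Ls) = int (mat_rank (M_mat \<delta> n Ls)) + int (\<Sum>i<length Ls. degree (Ls ! i))
        - int (length Ls) * int (n + 1)"
proof (intro conjI allI impI)
  have r: "\<forall>i<length Ls. degree (Ls ! i) \<le> n"
    using degree_le_ord_lclm[OF deriv nonzero] n_ge le_trans by blast
  show "concat_vecs (map (\<lambda>i. phi (n - degree (Ls ! i)) (Qs ! i)) [0..<length Ls]) (phi n L)
      \<in> left_kernel (M_mat \<delta> n Ls)"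
    if "common_left_multiple \<delta> Ls L \<and> degree L \<le> n \<and> length Qs = length Ls \<and>
      (\<forall>i<length Ls. L = dmult \<delta> (Qs ! i) (Ls ! i))" for L Qs
    using cofactor_vec_in_left_kernel[OF deriv nonzero r, of Qs L] that
    unfolding cofactor_vec_def by simp
  fix us u
  assume "length us = length Ls \<and>
    (\<forall>i<length Ls. dim_vec (us ! i) = n + 1 - degree (Ls ! i)) \<and> dim_vec u = n + 1 \<and>
    concat_vecs us u \<noteq> 0\<^sub>v (dim_vec (concat_vecs us u)) \<and>
    concat_vecs us u \<in> left_kernel (M_mat \<delta> n Ls)"
  then show "u \<noteq> 0\<^sub>v (n + 1)"
    and eqs: "\<And>i. i < length Ls \<Longrightarrow> phi_inv u = dmult \<delta> (phi_inv (us ! i)) (Ls ! i)"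
    using left_kernel_M_mat_common_left_multiple[OF deriv nonzero r, of us u] by simp_all
  then show "common_left_multiple \<delta> Ls (phi_inv u)"
    unfolding common_left_multiple_def by blast
next
  show "int (ord_lclm \<delta> Ls) = int (mat_rank (M_mat \<delta> n Ls)) + int (\<Sum>i<length Ls. degree (Ls ! i))
      - int (length Ls) * int (n + 1)"
    using arg_cong[OF ord_lclm_eq_rank_M_mat[OF deriv nonzero n_ge], of int] by (simp add: algebra_simps)
qed

end
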